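(* Let $I\subseteq\mathbb{R}$ be an interval equipped with its Borel $\sigma$-algebra and Lebesgue measure $\lambda$, and let $\Theta\subseteq\mathbb{R}$ be an interval. Let $\{p_\theta\}_{\theta\in\Theta}$ be a family of strictly positive probability densities on $I$ with respect to $\lambda$, with $\mathbb{P}_\theta=p_\theta\cdot\lambda$, having strictly monotone likelihood ratio: for all $\theta'<\theta''$ in $\Theta$, the function $x\mapsto p_{\theta''}(x)/p_{\theta'}(x)$ is strictly increasing on $I$. Fix $\theta_1\in\Theta$ such that $\Theta_1=\,]-\infty,\theta_1]\cap\Theta\neq\emptyset$ and $\Theta_0=\,]\theta_1,+\infty[\cap\Theta\neq\emptyset$. Then a measurable decision rule $\phi:I\to\{0,1\}$ is an expert for the choice between $\Theta_1$ and $\Theta_0$ if and only if there exists $t\in\overline{\mathbb{R}}=[-\infty,+\infty]$ such that $\phi=f_t$ $\lambda$-almost everywhere, where $f_t(x)=\mathbf{1}_{]-\infty,t[}(x)$.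
   Context: Given a statistical model $(\Omega,\mathcal{A},(\mathbb{P}_\theta)_{\theta\in\Theta})$ in which all $\mathbb{P}_\theta$ have strictly positive densities with respect to a common measure $\mu$, and a partition $\Theta=\Theta_0\cup\Theta_1$ (disjoint), a measurable decision rule $\phi:(\Omega,\mathcal{A})\to\{0,1\}$ (the value $d$ meaning "decide $\theta\in\Theta_d$") is called an expert for the choice between $\Theta_0$ and $\Theta_1$ if for every pair $(\theta_0,\theta_1)\in\Theta_0\times\Theta_1$ and every non-negligible event $C\in\mathcal{A}$ (i.e. $\mu(C)>0$) one has $$\frac{\mathbb{P}_{\theta_1}(C\cap\{\phi=1\})}{\mathbb{P}_{\theta_1}(C)}\;\geq\;\frac{\mathbb{P}_{\theta_0}(C\cap\{\phi=1\})}{\mathbb{P}_{\theta_0}(C)}.$$ Here $\Omega=I$, $\mu=\lambda$, decision $1$ corresponds to $\Theta_1=\,]-\infty,\theta_1]\cap\Theta$ and decision $0$ to $\Theta_0=\,]\theta_1,+\infty[\cap\Theta$. *)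

theory Defs
  imports "HOL-Analysis.Analysis"
begin

text \<open>Expert decision rule. mu is the dominating measure on Omega, P the family
  of probability measures, Th0/Th1 the two parts of the parameter set.
  Decision value d means "decide theta in Th_d".\<close>
definition expert ::
  "'a measure \<Rightarrow> ('b \<Rightarrow> 'a measure) \<Rightarrow> 'b set \<Rightarrow> 'b set \<Rightarrow> ('a \<Rightarrow> nat) \<Rightarrow> bool" where
  "expert mu P Th0 Th1 phi \<longleftrightarrow>
     phi \<in> measurable mu (count_space UNIV) \<and>
     (\<forall>x\<in>space mu. phi x \<in> {0,1}) \<and>
     (\<forall>a\<in>Th0. \<forall>b\<in>Th1. \<forall>C\<in>sets mu. emeasure mu C > 0 \<longrightarrow>
        measure (P b) (C \<inter> {x\<in>space mu. phi x = 1}) / measure (P b) C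
        \<ge> measure (P a) (C \<inter> {x\<in>space mu. phi x = 1}) / measure (P a) C)"

definition f_ind :: "ereal \<Rightarrow> real \<Rightarrow> nat" where
  "f_ind t x = (if ereal x < t then 1 else 0)"

end

theory Submission
  imports Defs
begin

text \<open>Fix a in Theta_0 and b in Theta_1, so b < a and r = p_a / p_b is strictly increasing on I.
  If every point of D lies below every point of E, some constant c separates r on D from r on E,
  hence P_a(D) <= c P_b(D) and c P_b(E) <= P_a(E); multiplying gives P_a(D) P_b(E) <= P_b(D) P_a(E),
  which for D = C \<inter> {x < t} and E = C - D is the expert inequality of the threshold rule f_t.
  Conversely, if an expert decided 0 on a non-null set E below some m and 1 on a non-null set F
  above m, the same argument with c = r(m) would give the strict reverse inequality for C = E \<union> F.
  So for every m, either the rule is 1 almost everywhere below m or 0 almost everywhere above m,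
  and the supremum t of the m of the first kind is a threshold: points are null, hence the rule
  agrees with f_t almost everywhere.\<close>

lemma emeasure_density_cmult:
  fixes h :: "'a \<Rightarrow> real"
  assumes "h \<in> borel_measurable M" "A \<in> sets M" "0 \<le> c"
  shows "emeasure (density M (\<lambda>x. ennreal (c * h x))) A = ennreal c * emeasure (density M h) A"
proof -
  have "emeasure (density M (\<lambda>x. ennreal (c * h x))) A = (\<integral>\<^sup>+x. ennreal c * (ennreal (h x) * indicator A x) \<partial>M)"
    using assms by (simp add: emeasure_density ennreal_mult' mult.assoc)
  also have "\<dots> = ennreal c * emeasure (density M h) A"
    using assms by (simp add: nn_integral_cmult emeasure_density)
  finally show ?thesis .
qed

lemma measure_density_cmult:
  fixes h :: "'a \<Rightarrow> real"
  assumes "h \<in> borel_measurable M" "A \<in> sets M" "0 \<le> c"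
  shows "measure (density M (\<lambda>x. ennreal (c * h x))) A = c * measure (density M h) A"
  using assms by (simp add: measure_def emeasure_density_cmult enn2real_mult)

lemma emeasure_density_mono:
  fixes h k :: "'a \<Rightarrow> real"
  assumes "h \<in> borel_measurable M" "k \<in> borel_measurable M" "A \<in> sets M"
    and "\<And>x. x \<in> A \<Longrightarrow> h x \<le> k x"
  shows "emeasure (density M h) A \<le> emeasure (density M k) A"
  using assms by (simp add: emeasure_density nn_integral_mono indicator_def ennreal_leI)

lemma measure_density_mono:
  fixes h k :: "'a \<Rightarrow> real"
  assumes "h \<in> borel_measurable M" "k \<in> borel_measurable M" "A \<in> sets M"
    and "emeasure (density M k) A \<noteq> \<infinity>"
    and "\<And>x. x \<in> A \<Longrightarrow> h x \<le> k x"
  shows "measure (density M h) A \<le> measure (density M k) A"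
  using assms emeasure_density_mono[OF assms(1-3)]
  by (simp add: measure_def enn2real_mono top.not_eq_extremum)

lemma measure_density_strict_mono:
  fixes h k :: "'a \<Rightarrow> real"
  assumes [measurable]: "h \<in> borel_measurable M" "k \<in> borel_measurable M" "A \<in> sets M"
    and "0 < emeasure M A" "emeasure (density M k) A \<noteq> \<infinity>"
    and "\<And>x. x \<in> A \<Longrightarrow> 0 \<le> h x" "\<And>x. x \<in> A \<Longrightarrow> h x < k x"
  shows "measure (density M h) A < measure (density M k) A"
proof -
  have "emeasure (density M h) A \<le> emeasure (density M k) A"
    using assms by (intro emeasure_density_mono) (auto intro: less_imp_le)
  then have h_finite: "emeasure (density M h) A \<noteq> \<infinity>"
    using assms(5) by (metis infinity_ennreal_def neq_top_trans)
  have "emeasure (density M h) A = (\<integral>\<^sup>+x. ennreal (h x) * indicator A x \<partial>M)"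
    by (simp add: emeasure_density)
  also have "\<dots> < (\<integral>\<^sup>+x. ennreal (k x) * indicator A x \<partial>M)"
  proof (rule nn_integral_less)
    show "(\<integral>\<^sup>+x. ennreal (h x) * indicator A x \<partial>M) \<noteq> \<infinity>"
      using h_finite by (simp add: emeasure_density)
    show "AE x in M. ennreal (h x) * indicator A x \<le> ennreal (k x) * indicator A x"
      using assms by (auto simp: indicator_def ennreal_leI less_imp_le)
    show "\<not> (AE x in M. ennreal (k x) * indicator A x \<le> ennreal (h x) * indicator A x)"
    proof
      assume "AE x in M. ennreal (k x) * indicator A x \<le> ennreal (h x) * indicator A x"
      then have "AE x in M. x \<notin> A"
        by eventually_elim (use assms in \<open>auto simp: indicator_def not_le[symmetric]\<close>)
      then have "emeasure M A = 0"
        using emeasure_eq_0_AE[of "\<lambda>x. x \<in> A" M] sets.sets_into_space[OF assms(3)]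
        by (simp add: Int_absorb1 Int_def[symmetric])
      then show False
        using assms(4) by simp
    qed
  qed simp_all
  also have "\<dots> = emeasure (density M k) A"
    by (simp add: emeasure_density)
  finally have "emeasure (density M h) A < emeasure (density M k) A" .
  then show ?thesis
    using h_finite assms(5) unfolding measure_def
    by (metis ennreal_enn2real ennreal_less_iff enn2real_nonneg infinity_ennreal_def top.not_eq_extremum)
qed

lemma measure_density_pos:
  fixes h :: "'a \<Rightarrow> real"
  assumes "h \<in> borel_measurable M" "A \<in> sets M" "0 < emeasure M A"
    and "emeasure (density M h) A \<noteq> \<infinity>" "\<And>x. x \<in> A \<Longrightarrow> 0 < h x"
  shows "0 < measure (density M h) A"
proof -
  have "measure (density M (\<lambda>_. 0)) A = 0"
    using assms(2) by (simp add: measure_def emeasure_density)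
  then show ?thesis
    using measure_density_strict_mono[of "\<lambda>_. 0" M h A] assms by simp
qed

lemma divide_add_le_divide_add_iff:
  fixes a b c d :: real
  assumes "0 < a + b" "0 < c + d"
  shows "a / (a + b) \<le> c / (c + d) \<longleftrightarrow> a * d \<le> c * b"
  using assms by (simp add: divide_le_eq le_divide_eq algebra_simps)

lemma divide_add_less_divide_add_iff:
  fixes a b c d :: real
  assumes "0 < a + b" "0 < c + d"
  shows "a / (a + b) < c / (c + d) \<longleftrightarrow> a * d < c * b"
  using assms by (simp add: divide_less_eq less_divide_eq algebra_simps)

lemma ex_separating_value:
  fixes r :: "'a \<Rightarrow> real"
  assumes "D \<noteq> {}" "E \<noteq> {}" and "\<And>x y. x \<in> D \<Longrightarrow> y \<in> E \<Longrightarrow> r x \<le> r y"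
  shows "\<exists>c. (\<forall>x\<in>D. r x \<le> c) \<and> (\<forall>y\<in>E. c \<le> r y)"
proof (intro exI conjI ballI)
  obtain y0 where "y0 \<in> E"
    using assms(2) by blast
  then have "bdd_above (r ` D)"
    using assms(3) by (intro bdd_aboveI[of _ "r y0"]) auto
  then show "r x \<le> Sup (r ` D)" if "x \<in> D" for x
    using that by (auto intro: cSup_upper)
  show "Sup (r ` D) \<le> r y" if "y \<in> E" for y
    using assms that by (auto intro: cSup_least)
qed

lemma measure_split_Int_Diff:
  assumes "finite_measure N" "C \<in> sets N" "A \<in> sets N"
  shows "measure N C = measure N (C \<inter> A) + measure N (C - A)"
  using finite_measure.finite_measure_Diff'[OF assms] by simp

locale positive_density_pair =
  fixes M :: "'a::linorder measure" and f g :: "'a \<Rightarrow> real"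
  assumes f_meas [measurable]: "f \<in> borel_measurable M"
    and g_meas [measurable]: "g \<in> borel_measurable M"
    and f_pos: "\<And>x. x \<in> space M \<Longrightarrow> 0 < f x"
    and g_pos: "\<And>x. x \<in> space M \<Longrightarrow> 0 < g x"
    and f_finite: "finite_measure (density M f)"
    and g_finite: "finite_measure (density M g)"
begin

abbreviation "Pf \<equiv> density M (\<lambda>x. ennreal (f x))"
abbreviation "Pg \<equiv> density M (\<lambda>x. ennreal (g x))"

lemma emeasure_Pf_finite: "emeasure Pf A \<noteq> \<infinity>"
  using finite_measure.emeasure_finite[OF f_finite] by simp

lemma emeasure_Pg_finite: "emeasure Pg A \<noteq> \<infinity>"
  using finite_measure.emeasure_finite[OF g_finite] by simp

lemma measure_Pf_pos:
  assumes "A \<in> sets M" "0 < emeasure M A"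
  shows "0 < measure Pf A"
  using assms emeasure_Pf_finite f_pos sets.sets_into_space[OF assms(1)]
  by (intro measure_density_pos) auto

lemma measure_Pg_pos:
  assumes "A \<in> sets M" "0 < emeasure M A"
  shows "0 < measure Pg A"
  using assms emeasure_Pg_finite g_pos sets.sets_into_space[OF assms(1)]
  by (intro measure_density_pos) auto

lemma measure_cross_le:
  assumes "D \<in> sets M" "E \<in> sets M" "0 \<le> c"
    and "\<And>x. x \<in> D \<Longrightarrow> f x \<le> c * g x" "\<And>y. y \<in> E \<Longrightarrow> c * g y \<le> f y"
  shows "measure Pf D * measure Pg E \<le> measure Pg D * measure Pf E"
proof -
  have "emeasure (density M (\<lambda>x. ennreal (c * g x))) D \<noteq> \<infinity>"
    using assms emeasure_Pg_finite by (simp add: emeasure_density_cmult ennreal_mult_eq_top_iff)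
  then have "measure Pf D \<le> c * measure Pg D"
    using assms by (subst measure_density_cmult[symmetric]) (auto intro!: measure_density_mono)
  moreover have "c * measure Pg E \<le> measure Pf E"
    using assms emeasure_Pf_finite
    by (subst measure_density_cmult[symmetric]) (auto intro!: measure_density_mono)
  ultimately have "measure Pf D * measure Pg E \<le> (c * measure Pg D) * measure Pg E"
    and "measure Pg D * (c * measure Pg E) \<le> measure Pg D * measure Pf E"
    by (auto intro: mult_right_mono mult_left_mono)
  then show ?thesis
    by (simp add: mult_ac)
qed

lemma measure_cross_less:
  assumes "D \<in> sets M" "E \<in> sets M" "0 < emeasure M D" "0 < emeasure M E" "0 \<le> c"
    and "\<And>x. x \<in> D \<Longrightarrow> f x < c * g x" "\<And>y. y \<in> E \<Longrightarrow> c * g y < f y"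
  shows "measure Pf D * measure Pg E < measure Pg D * measure Pf E"
proof -
  have D_space: "D \<subseteq> space M" and E_space: "E \<subseteq> space M"
    using assms(1,2) by (auto dest: sets.sets_into_space)
  have "emeasure (density M (\<lambda>x. ennreal (c * g x))) D \<noteq> \<infinity>"
    using assms emeasure_Pg_finite by (simp add: emeasure_density_cmult ennreal_mult_eq_top_iff)
  then have "measure Pf D < c * measure Pg D"
    using assms D_space f_pos
    by (subst measure_density_cmult[symmetric]) (auto intro!: measure_density_strict_mono less_imp_le)
  moreover have "0 \<le> c * g y" if "y \<in> E" for y
    using assms(5) g_pos[of y] E_space that by auto
  then have "c * measure Pg E < measure Pf E"
    using assms emeasure_Pf_finite
    by (subst measure_density_cmult[symmetric]) (auto intro!: measure_density_strict_mono)
  moreover have "0 < measure Pg D" "0 < measure Pg E"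
    using assms measure_Pg_pos by auto
  ultimately have "measure Pf D * measure Pg E < (c * measure Pg D) * measure Pg E"
    and "measure Pg D * (c * measure Pg E) < measure Pg D * measure Pf E"
    by auto
  then show ?thesis
    by (simp add: mult_ac)
qed

lemma conditional_lower_set_le:
  assumes mono: "mono_on (space M) (\<lambda>x. f x / g x)"
    and C: "C \<in> sets M" "0 < emeasure M C" and A: "A \<in> sets M"
    and lower: "\<And>x y. x \<in> C \<inter> A \<Longrightarrow> y \<in> C - A \<Longrightarrow> x \<le> y"
  shows "measure Pf (C \<inter> A) / measure Pf C \<le> measure Pg (C \<inter> A) / measure Pg C"
proof -
  have C_space: "C \<subseteq> space M"
    using C by (auto dest: sets.sets_into_space)
  have cross: "measure Pf (C \<inter> A) * measure Pg (C - A) \<le> measure Pg (C \<inter> A) * measure Pf (C - A)"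
  proof (cases "C \<inter> A = {} \<or> C - A = {}")
    case False
    have "f x / g x \<le> f y / g y" if "x \<in> C \<inter> A" "y \<in> C - A" for x y
      using mono lower[OF that] that C_space by (auto intro: mono_onD)
    then obtain c where c: "\<And>x. x \<in> C \<inter> A \<Longrightarrow> f x / g x \<le> c" "\<And>y. y \<in> C - A \<Longrightarrow> c \<le> f y / g y"
      using ex_separating_value[of "C \<inter> A" "C - A" "\<lambda>x. f x / g x"] False by blast
    obtain x0 where x0: "x0 \<in> C \<inter> A"
      using False by blast
    then have "x0 \<in> space M"
      using C_space by blast
    then have "0 < f x0 / g x0"
      using f_pos g_pos by simp
    then have "0 \<le> c"
      using c(1)[OF x0] by (meson less_le_trans less_imp_le)
    show ?thesis
    proof (rule measure_cross_le)
      show "f x \<le> c * g x" if "x \<in> C \<inter> A" for x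
        using c(1)[OF that] g_pos[of x] that C_space by (auto simp: pos_divide_le_eq)
      show "c * g y \<le> f y" if "y \<in> C - A" for y
        using c(2)[OF that] g_pos[of y] that C_space by (auto simp: pos_le_divide_eq)
    qed (use C A \<open>0 \<le> c\<close> in auto)
  next
    case True
    then show ?thesis
    proof
      assume "C - A = {}"
      then show ?thesis
        unfolding \<open>C - A = {}\<close> by simp
    qed simp
  qed
  have "measure Pf C = measure Pf (C \<inter> A) + measure Pf (C - A)"
    and "measure Pg C = measure Pg (C \<inter> A) + measure Pg (C - A)"
    using f_finite g_finite C A by (auto intro: measure_split_Int_Diff)
  moreover have "0 < measure Pf C" "0 < measure Pg C"
    using C measure_Pf_pos measure_Pg_pos by auto
  ultimately show ?thesis
    using cross divide_add_le_divide_add_iff by (metis mult.commute)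
qed

lemma conditional_upper_set_less:
  assumes mono: "strict_mono_on (space M) (\<lambda>x. f x / g x)"
    and E: "E \<in> sets M" "0 < emeasure M E" and F: "F \<in> sets M" "0 < emeasure M F"
    and m: "m \<in> space M" "\<And>x. x \<in> E \<Longrightarrow> x < m" "\<And>y. y \<in> F \<Longrightarrow> m < y"
  shows "measure Pg F / measure Pg (E \<union> F) < measure Pf F / measure Pf (E \<union> F)"
proof -
  have E_space: "E \<subseteq> space M" and F_space: "F \<subseteq> space M"
    using E F by (auto dest: sets.sets_into_space)
  have "E \<inter> F = {}"
    using m by fastforce
  then have "measure Pf (E \<union> F) = measure Pf F + measure Pf E"
    and "measure Pg (E \<union> F) = measure Pg F + measure Pg E"
    using finite_measure.finite_measure_Union[OF f_finite, of E F]
      finite_measure.finite_measure_Union[OF g_finite, of E F] E F by auto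
  moreover have "0 < measure Pf (E \<union> F)" "0 < measure Pg (E \<union> F)"
    using E F measure_Pf_pos measure_Pg_pos emeasure_mono[of E "E \<union> F" M]
    by (auto intro: order.strict_trans2)
  moreover have "measure Pf E * measure Pg F < measure Pg E * measure Pf F"
  proof (rule measure_cross_less)
    show "f x < f m / g m * g x" if "x \<in> E" for x
    proof -
      have "f x / g x < f m / g m"
        using mono m that E_space by (auto intro: strict_mono_onD)
      then show ?thesis
        using g_pos[of x] that E_space by (auto simp: pos_divide_less_eq)
    qed
    show "f m / g m * g y < f y" if "y \<in> F" for y
    proof -
      have "f m / g m < f y / g y"
        using mono m that F_space by (auto intro: strict_mono_onD)
      then show ?thesis
        using g_pos[of y] that F_space by (auto simp: pos_less_divide_eq)
    qed
    show "0 \<le> f m / g m"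
      using f_pos g_pos m by (simp add: less_imp_le)
  qed (use E F in auto)
  ultimately show ?thesis
    using divide_add_less_divide_add_iff by (metis mult.commute)
qed

end

lemma ex_threshold_AE:
  fixes M :: "real measure" and S :: "real \<Rightarrow> bool"
  assumes points_null: "\<And>m. AE x in M. x \<noteq> m"
    and no_crossing: "\<And>m. (AE x in M. x < m \<longrightarrow> S x) \<or> (AE x in M. m < x \<longrightarrow> \<not> S x)"
  shows "\<exists>t::ereal. AE x in M. S x \<longleftrightarrow> ereal x < t"
proof -
  define T where "T = {m. AE x in M. x < m \<longrightarrow> S x}"
  define t where "t = Sup (ereal ` T)"
  have T_down: "q \<in> T" if "m \<in> T" "q \<le> m" for q m
    using that unfolding T_def by (auto elim: eventually_mono)
  have countable: "countable (\<rat> \<inter> T)" "countable (\<rat> - T)"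
    by (auto intro: countable_subset[OF _ countable_rat])
  have "AE x in M. \<forall>q \<in> \<rat> \<inter> T. x < q \<longrightarrow> S x"
  proof (rule AE_ball_countable'[OF _ countable(1)])
    fix q assume "q \<in> \<rat> \<inter> T"
    then show "AE x in M. x < q \<longrightarrow> S x"
      by (simp add: T_def)
  qed
  then have below: "AE x in M. ereal x < t \<longrightarrow> S x"
  proof eventually_elim
    case (elim x)
    show ?case
    proof
      assume "ereal x < t"
      then obtain m where "m \<in> T" "x < m"
        by (auto simp: t_def less_Sup_iff)
      then obtain q where "q \<in> \<rat>" "x < q" "q < m"
        using Rats_dense_in_real by blast
      then show "S x"
        using elim T_down[OF \<open>m \<in> T\<close>, of q] by auto
    qed
  qed
  have "AE x in M. \<forall>q \<in> \<rat> - T. q < x \<longrightarrow> \<not> S x"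
  proof (rule AE_ball_countable'[OF _ countable(2)])
    fix q assume "q \<in> \<rat> - T"
    then have "\<not> (AE x in M. x < q \<longrightarrow> S x)"
      by (simp add: T_def)
    then show "AE x in M. q < x \<longrightarrow> \<not> S x"
      using no_crossing[of q] by blast
  qed
  then have above: "AE x in M. t < ereal x \<longrightarrow> \<not> S x"
  proof eventually_elim
    case (elim x)
    show ?case
    proof
      assume "t < ereal x"
      then obtain z where z: "t < ereal z" "ereal z < ereal x"
        using ereal_dense2 by blast
      then obtain q where "q \<in> \<rat>" "z < q" "q < x"
        using Rats_dense_in_real[of z x] by auto
      moreover have "q \<notin> T"
      proof
        assume "q \<in> T"
        then have "ereal q \<le> t"
          unfolding t_def by (rule SUP_upper)
        moreover have "ereal z < ereal q"
          using \<open>z < q\<close> by simp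
        ultimately show False
          using z(1) by order
      qed
      ultimately show "\<not> S x"
        using elim by blast
    qed
  qed
  have "AE x in M. ereal x \<noteq> t"
    by (cases t) (simp_all add: points_null)
  with below above have "AE x in M. S x \<longleftrightarrow> ereal x < t"
    by eventually_elim (metis neq_iff)
  then show ?thesis ..
qed

lemma expertD:
  assumes "expert mu P Th0 Th1 phi" "a \<in> Th0" "b \<in> Th1" "C \<in> sets mu" "0 < emeasure mu C"
  shows "measure (P a) (C \<inter> {x \<in> space mu. phi x = 1}) / measure (P a) C
      \<le> measure (P b) (C \<inter> {x \<in> space mu. phi x = 1}) / measure (P b) C"
  using assms unfolding expert_def by blast

locale strict_mlr_family =
  fixes I Theta :: "real set" and p :: "real \<Rightarrow> real \<Rightarrow> real"
  assumes I_int: "is_interval I"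
    and p_meas: "\<And>\<theta>. \<theta> \<in> Theta \<Longrightarrow> p \<theta> \<in> borel_measurable (restrict_space lborel I)"
    and p_pos: "\<And>\<theta> x. \<theta> \<in> Theta \<Longrightarrow> x \<in> I \<Longrightarrow> p \<theta> x > 0"
    and p_prob: "\<And>\<theta>. \<theta> \<in> Theta \<Longrightarrow>
                   (\<integral>\<^sup>+ x. ennreal (p \<theta> x) \<partial>(restrict_space lborel I)) = 1"
    and MLR: "\<And>\<theta>' \<theta>''. \<theta>' \<in> Theta \<Longrightarrow> \<theta>'' \<in> Theta \<Longrightarrow> \<theta>' < \<theta>'' \<Longrightarrow>
                 strict_mono_on I (\<lambda>x. p \<theta>'' x / p \<theta>' x)"
begin

abbreviation "M \<equiv> restrict_space lborel I"
abbreviation "P \<theta> \<equiv> density M (\<lambda>x. ennreal (p \<theta> x))"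

lemma space_M [simp]: "space M = I"
  by (simp add: space_restrict_space)

lemma I_sets_M [simp]: "I \<in> sets M"
  using sets.top[of M] by simp

lemma I_borel: "I \<inter> space lborel \<in> sets lborel"
  using real_interval_borel_measurable[OF I_int] by simp

lemma AE_M_neq: "AE x in M. x \<noteq> m"
proof -
  have "AE x in lborel. x \<in> I \<longrightarrow> x \<noteq> m"
    using AE_lborel_singleton[of m] by eventually_elim simp
  then show ?thesis
    using I_borel by (simp add: AE_restrict_space_iff)
qed

lemma id_measurable_M [measurable]: "(\<lambda>x. x) \<in> borel_measurable M"
  by (simp add: measurable_restrict_space1)

lemma finite_measure_P: "\<theta> \<in> Theta \<Longrightarrow> finite_measure (P \<theta>)"
proof
  assume "\<theta> \<in> Theta"
  then have "emeasure (P \<theta>) (space M) = (\<integral>\<^sup>+ x. ennreal (p \<theta> x) * indicator (space M) x \<partial>M)"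
    using p_meas by (intro emeasure_density) auto
  also have "\<dots> = (\<integral>\<^sup>+ x. ennreal (p \<theta> x) \<partial>M)"
    by (rule nn_integral_cong) simp
  finally show "emeasure (P \<theta>) (space (P \<theta>)) \<noteq> \<infinity>"
    using p_prob \<open>\<theta> \<in> Theta\<close> by simp
qed

lemma positive_density_pair_p:
  "a \<in> Theta \<Longrightarrow> b \<in> Theta \<Longrightarrow> positive_density_pair M (p a) (p b)"
  by (intro positive_density_pair.intro) (simp_all add: p_meas p_pos finite_measure_P)

lemma expert_no_crossing:
  assumes expert: "expert M P Th0 Th1 phi"
    and a: "a \<in> Th0" "a \<in> Theta" and b: "b \<in> Th1" "b \<in> Theta" and "b < a"
  shows "(AE x in M. x < m \<longrightarrow> phi x = 1) \<or> (AE x in M. m < x \<longrightarrow> phi x \<noteq> 1)"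
proof (rule ccontr)
  interpret positive_density_pair M "p a" "p b"
    using a(2) b(2) by (rule positive_density_pair_p)
  have phi_meas [measurable]: "phi \<in> measurable M (count_space UNIV)"
    using expert by (simp add: expert_def)
  define E where "E = {x \<in> space M. \<not> (x < m \<longrightarrow> phi x = 1)}"
  define F where "F = {x \<in> space M. \<not> (m < x \<longrightarrow> phi x \<noteq> 1)}"
  have sets: "E \<in> sets M" "F \<in> sets M"
    unfolding E_def F_def by measurable
  assume "\<not> ((AE x in M. x < m \<longrightarrow> phi x = 1) \<or> (AE x in M. m < x \<longrightarrow> phi x \<noteq> 1))"
  then have "E \<notin> null_sets M" "F \<notin> null_sets M"
    using sets by (simp_all only: E_def F_def AE_iff_null) blast+
  then have pos: "0 < emeasure M E" "0 < emeasure M F"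
    using sets by (auto simp: zero_less_iff_neq_zero null_setsI)
  have E_below: "\<And>x. x \<in> E \<Longrightarrow> x < m" and F_above: "\<And>y. y \<in> F \<Longrightarrow> m < y"
    by (auto simp: E_def F_def)
  have "E \<noteq> {}" "F \<noteq> {}"
    using pos by auto
  then obtain x y where "x \<in> E" "y \<in> F"
    by blast
  moreover from this have "x \<in> I" "y \<in> I"
    by (auto simp: E_def F_def)
  ultimately have "m \<in> I"
    using I_int E_below F_above by (meson is_interval_1 less_imp_le)
  then have "measure (P b) F / measure (P b) (E \<union> F) < measure (P a) F / measure (P a) (E \<union> F)"
    using MLR[OF b(2) a(2) \<open>b < a\<close>] sets pos E_below F_above
    by (intro conditional_upper_set_less) simp_all
  moreover have "(E \<union> F) \<inter> {x \<in> space M. phi x = 1} = F"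
    by (auto simp: E_def F_def)
  moreover have "0 < emeasure M (E \<union> F)"
    using pos(1) by (rule order.strict_trans2) (use sets in \<open>auto intro: emeasure_mono\<close>)
  ultimately show False
    using expertD[OF expert a(1) b(1) sets.Un[OF sets]] by simp
qed

lemma expert_imp_threshold:
  assumes expert: "expert M P Th0 Th1 phi"
    and a: "a \<in> Th0" "a \<in> Theta" and b: "b \<in> Th1" "b \<in> Theta" and "b < a"
  shows "\<exists>t. AE x in M. phi x = f_ind t x"
proof -
  obtain t where t: "AE x in M. phi x = 1 \<longleftrightarrow> ereal x < t"
    using ex_threshold_AE[OF AE_M_neq expert_no_crossing[OF assms]] by blast
  have range: "\<forall>x\<in>space M. phi x \<in> {0, 1}"
    using expert by (simp add: expert_def)
  have "AE x in M. phi x = f_ind t x"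
    using t AE_space by eventually_elim (use range in \<open>auto simp: f_ind_def\<close>)
  then show ?thesis ..
qed

lemma threshold_imp_expert:
  assumes Th: "Th0 \<subseteq> Theta" "Th1 \<subseteq> Theta" "\<And>a b. a \<in> Th0 \<Longrightarrow> b \<in> Th1 \<Longrightarrow> b < a"
    and phi_meas [measurable]: "phi \<in> measurable M (count_space UNIV)"
    and phi_range: "\<And>x. x \<in> I \<Longrightarrow> phi x \<in> {0, 1}"
    and t: "AE x in M. phi x = f_ind t x"
  shows "expert M P Th0 Th1 phi"
  unfolding expert_def
proof (intro conjI ballI impI)
  fix a b C assume a: "a \<in> Th0" and b: "b \<in> Th1" and C: "C \<in> sets M" "0 < emeasure M C"
  have ab: "a \<in> Theta" "b \<in> Theta" "b < a"
    using a b Th by auto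
  interpret positive_density_pair M "p a" "p b"
    using ab(1,2) by (rule positive_density_pair_p)
  define A where "A = {x \<in> space M. ereal x < t}"
  have A: "A \<in> sets M"
    unfolding A_def by measurable
  have phi_1: "{x \<in> space M. phi x = 1} \<in> sets M"
    by measurable
  have eq: "measure (P \<theta>) (C \<inter> {x \<in> space M. phi x = 1}) = measure (P \<theta>) (C \<inter> A)"
    if "\<theta> \<in> Theta" for \<theta>
  proof (rule measure_eq_AE)
    have "AE x in M. x \<in> C \<inter> {x \<in> space M. phi x = 1} \<longleftrightarrow> x \<in> C \<inter> A"
      using t AE_space by eventually_elim (auto simp: A_def f_ind_def)
    then show "AE x in P \<theta>. x \<in> C \<inter> {x \<in> space M. phi x = 1} \<longleftrightarrow> x \<in> C \<inter> A"
      using p_meas[OF that] by (auto simp: AE_density elim: eventually_mono)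
  qed (use C A phi_1 in auto)
  have "measure Pf (C \<inter> A) / measure Pf C \<le> measure Pg (C \<inter> A) / measure Pg C"
  proof (rule conditional_lower_set_le)
    show "mono_on (space M) (\<lambda>x. p a x / p b x)"
      using strict_mono_on_imp_mono_on[OF MLR[OF ab(2,1,3)]] by simp
    show "x \<le> y" if "x \<in> C \<inter> A" "y \<in> C - A" for x y
    proof -
      have "y \<in> space M"
        using that(2) C(1) sets.sets_into_space by blast
      then have "ereal x < t" "\<not> ereal y < t"
        using that by (auto simp: A_def)
      then have "ereal x < ereal y"
        by order
      then show ?thesis
        by simp
    qed
  qed (use C A in auto)
  then show "measure (P a) (C \<inter> {x \<in> space M. phi x = 1}) / measure (P a) C
      \<le> measure (P b) (C \<inter> {x \<in> space M. phi x = 1}) / measure (P b) C"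
    using eq[OF ab(1)] eq[OF ab(2)] by simp
qed (use phi_meas phi_range in auto)

end

theorem proposition3p1:
  fixes I Theta :: "real set" and p :: "real \<Rightarrow> real \<Rightarrow> real"
    and theta1 :: real and phi :: "real \<Rightarrow> nat"
  assumes I_int: "is_interval I"
    and Theta_int: "is_interval Theta"
    and p_meas: "\<And>\<theta>. \<theta> \<in> Theta \<Longrightarrow> p \<theta> \<in> borel_measurable (restrict_space lborel I)"
    and p_pos: "\<And>\<theta> x. \<theta> \<in> Theta \<Longrightarrow> x \<in> I \<Longrightarrow> p \<theta> x > 0"
    and p_prob: "\<And>\<theta>. \<theta> \<in> Theta \<Longrightarrow>
                   (\<integral>\<^sup>+ x. ennreal (p \<theta> x) \<partial>(restrict_space lborel I)) = 1"
    and MLR: "\<And>\<theta>' \<theta>''. \<theta>' \<in> Theta \<Longrightarrow> \<theta>'' \<in> Theta \<Longrightarrow> \<theta>' < \<theta>'' \<Longrightarrow>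
                 strict_mono_on I (\<lambda>x. p \<theta>'' x / p \<theta>' x)"
    and theta1_in: "theta1 \<in> Theta"
    and Th1_ne: "{\<theta>\<in>Theta. \<theta> \<le> theta1} \<noteq> {}"
    and Th0_ne: "{\<theta>\<in>Theta. \<theta> > theta1} \<noteq> {}"
    and phi_meas: "phi \<in> measurable (restrict_space lborel I) (count_space UNIV)"
    and phi_range: "\<And>x. x \<in> I \<Longrightarrow> phi x \<in> {0, 1}"
  shows "expert (restrict_space lborel I)
            (\<lambda>\<theta>. density (restrict_space lborel I) (\<lambda>x. ennreal (p \<theta> x)))
            {\<theta>\<in>Theta. \<theta> > theta1} {\<theta>\<in>Theta. \<theta> \<le> theta1} phi
         \<longleftrightarrow> (\<exists>t::ereal. AE x in restrict_space lborel I. phi x = f_ind t x)"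
proof -
  interpret strict_mlr_family I Theta p
    using I_int p_meas p_pos p_prob MLR by unfold_locales
  show ?thesis
  proof
    assume expert: "expert M P {\<theta>\<in>Theta. \<theta> > theta1} {\<theta>\<in>Theta. \<theta> \<le> theta1} phi"
    obtain a b where "a \<in> Theta" "theta1 < a" "b \<in> Theta" "b \<le> theta1"
      using Th0_ne Th1_ne by blast
    then show "\<exists>t. AE x in M. phi x = f_ind t x"
      by (intro expert_imp_threshold[OF expert, where a = a and b = b]) auto
  next
    assume "\<exists>t. AE x in M. phi x = f_ind t x"
    then obtain t where "AE x in M. phi x = f_ind t x" ..
    with phi_meas phi_range show "expert M P {\<theta>\<in>Theta. \<theta> > theta1} {\<theta>\<in>Theta. \<theta> \<le> theta1} phi"
      by (intro threshold_imp_expert) auto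
  qed
qed

end
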